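(* Let $\gamma>0$, $\alpha\in\mathbb{R}$ and $p\ge\max\{1,1-\alpha\}$. There is a constant $C>0$ depending only on $p,\gamma,\alpha$ such that for every characteristic function $f$ of a measurable subset of $(0,\infty)$ of finite Lebesgue measure, $$\int_0^\infty f(t)\sinh^\gamma t\,dt\le C\Big(\int_0^\infty f(t)\cosh^\alpha t\,\sinh^{p\gamma-\alpha}t\,dt\Big)^{1/p}.$$ *)

theory Defs
  imports "HOL-Analysis.Analysis"
begin

definition ennreal_powr :: "ennreal \<Rightarrow> real \<Rightarrow> ennreal" where
  "ennreal_powr x a = (if x = \<infinity> then \<infinity> else ennreal (enn2real x powr a))"

end

theory Submission imports Defs begin

text \<open>
  Let \<open>w t = cosh t powr \<alpha> * sinh t powr (p * \<gamma> - \<alpha>)\<close> and \<open>a = max 0 (- \<alpha>)\<close>. Since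
  \<open>cosh t \<le> 1 + sinh t\<close>, the ratio \<open>w t / sinh t powr \<gamma>\<close> is at least \<open>2 powr (- a)\<close> times
  the broken power \<open>\<rho> (sinh t)\<close>, where \<open>\<rho> s = s powr ((p - 1) * \<gamma>) * min 1 s powr a\<close> is increasing.
  For \<open>p > 1\<close> and any level \<open>y > 0\<close>, split \<open>E\<close> at the point \<open>t\<^sub>0\<close> with \<open>\<rho> (sinh t\<^sub>0) = y\<close>:
  beyond \<open>t\<^sub>0\<close> the integrand is at most \<open>2 powr a / y\<close> times the weight, while the whole
  interval \<open>[0, t\<^sub>0]\<close> carries at most \<open>(1 + 1 / \<gamma>) * y powr (1 / (p - 1))\<close>; here \<open>a \<le> p - 1\<close>
  is what makes the small-\<open>t\<close> regime work. Choosing \<open>y\<close> to balance the two terms gives the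
  constant \<open>1 + 1 / \<gamma> + 2 powr a\<close>. For \<open>p = 1\<close> one has \<open>\<alpha> \<ge> 0\<close> and the weight dominates
  \<open>sinh t powr \<gamma>\<close> pointwise.
\<close>

lemma sinh_ge_self: "0 \<le> x \<Longrightarrow> x \<le> sinh (x::real)"
  using real_le_x_sinh[of x] by (simp add: sinh_field_def exp_minus)

lemma cosh_le_1_plus_sinh: "0 \<le> t \<Longrightarrow> cosh t \<le> 1 + sinh (t::real)"
  using cosh_minus_sinh[of t] exp_le_one_iff[of "- t"] by linarith

lemma cosh_powr_sinh_powr_lower_bound:
  fixes t \<alpha> \<beta> :: real
  assumes "t > 0"
  shows "min 1 (sinh t) powr max 0 (- \<alpha>) * sinh t powr \<beta>
    \<le> 2 powr max 0 (- \<alpha>) * (cosh t powr \<alpha> * sinh t powr (\<beta> - \<alpha>))"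
proof -
  have s: "sinh t > 0" using assms by simp
  have coth_form: "cosh t powr \<alpha> * sinh t powr (\<beta> - \<alpha>) = (cosh t / sinh t) powr \<alpha> * sinh t powr \<beta>"
    using s by (simp add: powr_diff powr_divide)
  show ?thesis
  proof (cases "\<alpha> \<ge> 0")
    case True
    have "1 \<le> (cosh t / sinh t) powr \<alpha>"
      using s True sinh_le_cosh_real[of t] by (simp add: ge_one_powr_ge_zero)
    then show ?thesis
      using True s by (simp add: coth_form)
  next
    case False
    have "min 1 (sinh t) / 2 \<le> sinh t / cosh t"
      using s cosh_le_1_plus_sinh[of t] by (auto simp: min_def field_simps)
    then have "(min 1 (sinh t) / 2) powr (- \<alpha>) \<le> (sinh t / cosh t) powr (- \<alpha>)"
      using False s by (intro powr_mono2) auto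
    then have "min 1 (sinh t) powr (- \<alpha>) \<le> 2 powr (- \<alpha>) * (cosh t / sinh t) powr \<alpha>"
      using s by (simp add: powr_divide powr_minus divide_simps)
    then show ?thesis
      using False s by (simp add: coth_form mult.assoc[symmetric] mult_right_mono)
  qed
qed

lemma borel_measurable_sinh_powr: "(\<lambda>t. sinh t powr a :: real) \<in> borel_measurable lebesgue"
proof (rule measurable_completion)
  have "(sinh :: real \<Rightarrow> real) \<in> borel_measurable borel"
    by (intro borel_measurable_continuous_onI continuous_on_sinh continuous_on_id)
  then show "(\<lambda>t. sinh t powr a :: real) \<in> borel_measurable lborel"
    by simp
qed

lemma borel_measurable_cosh_powr: "(\<lambda>t. cosh t powr a :: real) \<in> borel_measurable lebesgue"
proof (rule measurable_completion)
  have "(cosh :: real \<Rightarrow> real) \<in> borel_measurable borel"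
    by (intro borel_measurable_continuous_onI continuous_on_cosh continuous_on_id)
  then show "(\<lambda>t. cosh t powr a :: real) \<in> borel_measurable lborel"
    by simp
qed

lemma nn_integral_sinh_powr_Icc_le_antiderivative:
  fixes \<gamma> T :: real
  assumes "\<gamma> > 0" and "T \<ge> 0"
  shows "(\<integral>\<^sup>+ t. ennreal (indicator {0..T} t * sinh t powr \<gamma>) \<partial>lebesgue) \<le> ennreal (sinh T powr \<gamma> / \<gamma>)"
proof -
  have ftc: "((\<lambda>t. sinh t powr (\<gamma> - 1) * cosh t) has_integral sinh T powr \<gamma> / \<gamma>) {0..T}"
  proof -
    have "((\<lambda>t. sinh t powr (\<gamma> - 1) * cosh t) has_integral sinh T powr \<gamma> / \<gamma> - sinh 0 powr \<gamma> / \<gamma>) {0..T}"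
    proof (rule fundamental_theorem_of_calculus_interior[OF \<open>T \<ge> 0\<close>])
      show "continuous_on {0..T} (\<lambda>t. sinh t powr \<gamma> / \<gamma>)"
        using assms by (intro continuous_intros continuous_on_powr') (auto intro: continuous_intros)
    next
      fix x assume "x \<in> {0<..<T}"
      then have "sinh x > 0" by simp
      then have "((\<lambda>t. sinh t powr \<gamma> / \<gamma>) has_real_derivative sinh x powr (\<gamma> - 1) * cosh x) (at x)"
        using assms by (auto intro!: derivative_eq_intros)
      then show "((\<lambda>t. sinh t powr \<gamma> / \<gamma>) has_vector_derivative sinh x powr (\<gamma> - 1) * cosh x) (at x)"
        by (simp add: has_real_derivative_iff_has_vector_derivative)
    qed
    then show ?thesis using assms by simp
  qed
  have "(\<integral>\<^sup>+ t. ennreal (indicator {0..T} t * sinh t powr \<gamma>) \<partial>lebesgue)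
      \<le> (\<integral>\<^sup>+ t. ennreal (indicator {0..T} t * (sinh t powr (\<gamma> - 1) * cosh t)) \<partial>lebesgue)"
  proof (intro nn_integral_mono ennreal_leI)
    fix t
    show "indicator {0..T} t * sinh t powr \<gamma> \<le> indicator {0..T} t * (sinh t powr (\<gamma> - 1) * cosh t)"
    proof (cases "t \<in> {0..T} \<and> t > 0")
      case True
      then have "sinh t powr \<gamma> = sinh t powr (\<gamma> - 1) * sinh t"
        by (simp add: powr_diff)
      also have "\<dots> \<le> sinh t powr (\<gamma> - 1) * cosh t"
        by (intro mult_left_mono sinh_le_cosh_real) simp
      finally show ?thesis using True by simp
    qed (use assms in \<open>auto simp: indicator_def\<close>)
  qed
  also have "\<dots> = ennreal (sinh T powr \<gamma> / \<gamma>)"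
    using nn_integral_has_integral_lebesgue[OF _ ftc] by (simp add: nn_integral_completion)
  finally show ?thesis .
qed

lemma nn_integral_sinh_powr_Icc_le_sup:
  fixes \<gamma> T :: real
  assumes "\<gamma> > 0" and "T \<ge> 0"
  shows "(\<integral>\<^sup>+ t. ennreal (indicator {0..T} t * sinh t powr \<gamma>) \<partial>lebesgue) \<le> ennreal (T * sinh T powr \<gamma>)"
proof -
  have "(\<integral>\<^sup>+ t. ennreal (indicator {0..T} t * sinh t powr \<gamma>) \<partial>lebesgue)
      \<le> (\<integral>\<^sup>+ t. ennreal (sinh T powr \<gamma>) * indicator {0..T} t \<partial>lebesgue)"
    using assms by (intro nn_integral_mono)
      (auto simp: indicator_def ennreal_leI intro!: powr_mono2)
  also have "\<dots> = ennreal (T * sinh T powr \<gamma>)"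
    using assms by (simp add: nn_integral_cmult_indicator emeasure_lborel_Icc ennreal_mult' mult.commute)
  finally show ?thesis .
qed

lemma nn_integral_sinh_powr_Icc_le:
  fixes \<gamma> T :: real
  assumes "\<gamma> > 0" and "T \<ge> 0"
  shows "(\<integral>\<^sup>+ t. ennreal (indicator {0..T} t * sinh t powr \<gamma>) \<partial>lebesgue)
    \<le> ennreal ((1 + 1 / \<gamma>) * sinh T powr \<gamma> * min 1 (sinh T))"
proof (cases "sinh T \<le> 1")
  case True
  have "T * sinh T powr \<gamma> \<le> sinh T * sinh T powr \<gamma>"
    using assms sinh_ge_self[of T] by (intro mult_right_mono) auto
  also have "\<dots> \<le> (1 + 1 / \<gamma>) * sinh T powr \<gamma> * min 1 (sinh T)"
    using assms True by (simp add: min_def algebra_simps)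
  finally show ?thesis
    using nn_integral_sinh_powr_Icc_le_sup[OF assms] by (meson ennreal_leI order_trans)
next
  case False
  have "sinh T powr \<gamma> / \<gamma> \<le> (1 + 1 / \<gamma>) * sinh T powr \<gamma> * min 1 (sinh T)"
    using assms False by (simp add: min_def field_simps)
  then show ?thesis
    using nn_integral_sinh_powr_Icc_le_antiderivative[OF assms] by (meson ennreal_leI order_trans)
qed

definition broken_power :: "real \<Rightarrow> real \<Rightarrow> real \<Rightarrow> real" where
  "broken_power q a s = s powr q * min 1 s powr a"

lemma broken_power_pos: "s > 0 \<Longrightarrow> broken_power q a s > 0"
  by (simp add: broken_power_def)

lemma broken_power_mono:
  assumes "q \<ge> 0" and "a \<ge> 0" and "0 < s" and "s \<le> s'"
  shows "broken_power q a s \<le> broken_power q a s'"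
  unfolding broken_power_def
  using assms by (intro mult_mono powr_mono2) auto

lemma broken_power_surj:
  assumes "q > 0" and "a \<ge> 0" and "y > 0"
  obtains s where "s > 0" and "broken_power q a s = y"
proof (cases "y \<ge> 1")
  case True
  define s where "s = y powr (1 / q)"
  have "s \<ge> 1" using assms True unfolding s_def by (simp add: ge_one_powr_ge_zero)
  moreover have "s powr q = y" using assms unfolding s_def by (simp add: powr_powr)
  ultimately show ?thesis
    by (intro that[of s]) (auto simp: broken_power_def)
next
  case False
  define s where "s = y powr (1 / (q + a))"
  have "s < 1" "s > 0" using assms False unfolding s_def by (auto simp: powr01_less_one)
  moreover have "s powr (q + a) = y" using assms unfolding s_def by (simp add: powr_powr)
  ultimately show ?thesis
    by (intro that[of s]) (auto simp: broken_power_def powr_add)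
qed

lemma powr_min_le_broken_power_root:
  fixes p \<gamma> a s :: real
  assumes "p > 1" and "\<gamma> > 0" and "0 \<le> a" and "a \<le> p - 1" and "s > 0"
  shows "s powr \<gamma> * min 1 s \<le> broken_power ((p - 1) * \<gamma>) a s powr (1 / (p - 1))"
proof -
  have "min 1 s powr 1 \<le> min 1 s powr (a / (p - 1))"
    using assms by (intro powr_mono') (auto simp: field_simps)
  then have "s powr \<gamma> * min 1 s \<le> s powr \<gamma> * min 1 s powr (a / (p - 1))"
    by (simp add: mult_left_mono)
  also have "\<dots> = broken_power ((p - 1) * \<gamma>) a s powr (1 / (p - 1))"
    using assms by (simp add: broken_power_def powr_mult powr_powr)
  finally show ?thesis .
qed

lemma sinh_powr_le_scaled_weight:
  fixes \<gamma> \<alpha> p s t :: real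
  assumes "\<gamma> > 0" and "p \<ge> 1" and "s > 0" and "s \<le> sinh t"
  defines "a \<equiv> max 0 (- \<alpha>)"
  shows "sinh t powr \<gamma>
    \<le> 2 powr a / broken_power ((p - 1) * \<gamma>) a s * (cosh t powr \<alpha> * sinh t powr (p * \<gamma> - \<alpha>))"
proof -
  define \<rho> where "\<rho> = broken_power ((p - 1) * \<gamma>) a s"
  have "t > 0" using assms by (metis sinh_real_pos_iff order_less_le_trans)
  have \<rho>: "\<rho> > 0" using assms unfolding \<rho>_def by (simp add: broken_power_pos)
  have "\<rho> * sinh t powr \<gamma> \<le> broken_power ((p - 1) * \<gamma>) a (sinh t) * sinh t powr \<gamma>"
    unfolding \<rho>_def using assms by (intro mult_right_mono broken_power_mono) auto
  also have "\<dots> = min 1 (sinh t) powr a * sinh t powr (p * \<gamma>)"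
    using \<open>t > 0\<close> by (simp add: broken_power_def powr_add[symmetric] algebra_simps)
  also have "\<dots> \<le> 2 powr a * (cosh t powr \<alpha> * sinh t powr (p * \<gamma> - \<alpha>))"
    unfolding a_def using \<open>t > 0\<close> by (rule cosh_powr_sinh_powr_lower_bound)
  finally show ?thesis
    using \<rho> unfolding \<rho>_def[symmetric] by (simp add: field_simps)
qed

lemma nn_integral_sinh_powr_le_head_plus_tail:
  fixes \<gamma> \<alpha> p s :: real and E :: "real set"
  assumes "\<gamma> > 0" and "p \<ge> 1" and "s > 0"
    and E: "E \<in> sets lebesgue" "E \<subseteq> {0<..}"
  defines "a \<equiv> max 0 (- \<alpha>)"
  shows "(\<integral>\<^sup>+ t. ennreal (indicator E t * sinh t powr \<gamma>) \<partial>lebesgue)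
    \<le> (\<integral>\<^sup>+ t. ennreal (indicator {0..arsinh s} t * sinh t powr \<gamma>) \<partial>lebesgue)
      + ennreal (2 powr a / broken_power ((p - 1) * \<gamma>) a s)
        * (\<integral>\<^sup>+ t. ennreal (indicator E t * cosh t powr \<alpha> * sinh t powr (p * \<gamma> - \<alpha>)) \<partial>lebesgue)"
proof -
  define c where "c = 2 powr a / broken_power ((p - 1) * \<gamma>) a s"
  define w where "w t = indicator E t * cosh t powr \<alpha> * sinh t powr (p * \<gamma> - \<alpha>)" for t
  have "c \<ge> 0" using \<open>s > 0\<close> unfolding c_def by (simp add: broken_power_pos less_imp_le)
  have pointwise: "ennreal (indicator E t * sinh t powr \<gamma>)
      \<le> ennreal (indicator {0..arsinh s} t * sinh t powr \<gamma>) + ennreal c * ennreal (w t)" for t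
  proof (cases "t \<in> E \<and> arsinh s < t")
    case True
    then have "s \<le> sinh t" using sinh_real_le_iff[of "arsinh s" t] by simp
    then have "sinh t powr \<gamma> \<le> c * w t"
      using sinh_powr_le_scaled_weight[of \<gamma> p s t \<alpha>] assms True
      unfolding w_def c_def by (simp add: mult.assoc)
    then have "ennreal (sinh t powr \<gamma>) \<le> ennreal c * ennreal (w t)"
      using \<open>c \<ge> 0\<close> by (simp add: ennreal_mult'[symmetric] ennreal_leI)
    then show ?thesis
      using True by (simp add: add_increasing)
  qed (use E in \<open>auto simp: indicator_def intro: add_increasing2\<close>)
  have w_measurable: "(\<lambda>t. ennreal (w t)) \<in> borel_measurable lebesgue"
    unfolding w_def using E
    by (intro measurable_compose[OF _ measurable_ennreal] borel_measurable_times
        borel_measurable_indicator borel_measurable_sinh_powr borel_measurable_cosh_powr)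
  have head_measurable:
    "(\<lambda>t. ennreal (indicator {0..arsinh s} t * sinh t powr \<gamma>)) \<in> borel_measurable lebesgue"
    by (intro measurable_compose[OF _ measurable_ennreal] borel_measurable_times
        borel_measurable_indicator borel_measurable_sinh_powr) simp
  have "(\<integral>\<^sup>+ t. ennreal (indicator E t * sinh t powr \<gamma>) \<partial>lebesgue)
      \<le> (\<integral>\<^sup>+ t. ennreal (indicator {0..arsinh s} t * sinh t powr \<gamma>) + ennreal c * ennreal (w t) \<partial>lebesgue)"
    by (intro nn_integral_mono pointwise)
  also have "\<dots> = (\<integral>\<^sup>+ t. ennreal (indicator {0..arsinh s} t * sinh t powr \<gamma>) \<partial>lebesgue)
        + ennreal c * (\<integral>\<^sup>+ t. ennreal (w t) \<partial>lebesgue)"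
    using w_measurable by (simp add: nn_integral_add[OF head_measurable] nn_integral_cmult)
  finally show ?thesis unfolding w_def c_def .
qed

lemma nn_integral_sinh_powr_split_bound:
  fixes \<gamma> \<alpha> p y :: real and E :: "real set"
  assumes "\<gamma> > 0" and "p > 1" and "p \<ge> 1 - \<alpha>" and "y > 0"
    and E: "E \<in> sets lebesgue" "E \<subseteq> {0<..}"
  shows "(\<integral>\<^sup>+ t. ennreal (indicator E t * sinh t powr \<gamma>) \<partial>lebesgue)
    \<le> ennreal ((1 + 1 / \<gamma>) * y powr (1 / (p - 1)))
      + ennreal (2 powr max 0 (- \<alpha>) / y)
        * (\<integral>\<^sup>+ t. ennreal (indicator E t * cosh t powr \<alpha> * sinh t powr (p * \<gamma> - \<alpha>)) \<partial>lebesgue)"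
proof -
  define a where "a = max 0 (- \<alpha>)"
  obtain s where "s > 0" and s: "broken_power ((p - 1) * \<gamma>) a s = y"
    using broken_power_surj[of "(p - 1) * \<gamma>" a y] assms unfolding a_def by auto
  have "arsinh s \<ge> 0" using \<open>s > 0\<close> sinh_real_nonneg_iff[of "arsinh s"] by simp
  have "s powr \<gamma> * min 1 s \<le> y powr (1 / (p - 1))"
    using powr_min_le_broken_power_root[of p \<gamma> a s] s assms \<open>s > 0\<close> unfolding a_def by simp
  then have "(1 + 1 / \<gamma>) * sinh (arsinh s) powr \<gamma> * min 1 (sinh (arsinh s))
      \<le> (1 + 1 / \<gamma>) * y powr (1 / (p - 1))"
    using assms unfolding sinh_arsinh_real mult.assoc by (intro mult_left_mono) auto
  then have "(\<integral>\<^sup>+ t. ennreal (indicator {0..arsinh s} t * sinh t powr \<gamma>) \<partial>lebesgue)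
      \<le> ennreal ((1 + 1 / \<gamma>) * y powr (1 / (p - 1)))"
    using nn_integral_sinh_powr_Icc_le[OF \<open>\<gamma> > 0\<close> \<open>arsinh s \<ge> 0\<close>] by (meson ennreal_leI order_trans)
  then show ?thesis
    using nn_integral_sinh_powr_le_head_plus_tail[OF \<open>\<gamma> > 0\<close> _ \<open>s > 0\<close> E, of p \<alpha>] assms s
    unfolding a_def by (auto intro: order_trans add_right_mono)
qed

lemma ennreal_le_powr_of_tradeoff:
  fixes G :: ennreal and p A B x :: real
  assumes "p > 1" and "A \<ge> 0" and "B \<ge> 0" and "x \<ge> 0"
    and bound: "\<And>y. y > 0 \<Longrightarrow> G \<le> ennreal (A * y powr (1 / (p - 1))) + ennreal (B / y) * ennreal x"
  shows "G \<le> ennreal ((A + B) * x powr (1 / p))"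
proof (cases "x = 0")
  case True
  have "G \<le> 0"
  proof (rule ennreal_le_epsilon)
    fix e :: real
    assume "e > 0"
    define y where "y = (e / (A + 1)) powr (p - 1)"
    have "y > 0" using \<open>e > 0\<close> assms unfolding y_def by simp
    have "A * y powr (1 / (p - 1)) = A * (e / (A + 1))"
      using \<open>e > 0\<close> assms unfolding y_def by (simp add: powr_powr)
    also have "\<dots> \<le> e"
      using \<open>e > 0\<close> assms by (simp add: field_simps)
    finally show "G \<le> 0 + ennreal e"
      using bound[OF \<open>y > 0\<close>] True by (simp add: ennreal_leI order_trans)
  qed
  then show ?thesis by simp
next
  case False
  define y where "y = x powr ((p - 1) / p)"
  have "y > 0" using False assms unfolding y_def by simp
  have root: "y powr (1 / (p - 1)) = x powr (1 / p)"
    using assms unfolding y_def by (simp add: powr_powr)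
  have quotient: "B / y * x = B * x powr (1 / p)"
  proof -
    have "(p - 1) / p + 1 / p = 1"
      using assms by (simp add: diff_divide_distrib)
    then have "x powr 1 = y * x powr (1 / p)"
      unfolding y_def by (simp add: powr_add[symmetric])
    then have "B / y * x = B / y * (y * x powr (1 / p))"
      using assms by simp
    also have "\<dots> = B * x powr (1 / p)"
      using \<open>y > 0\<close> by simp
    finally show ?thesis .
  qed
  have "G \<le> ennreal (A * y powr (1 / (p - 1))) + ennreal (B / y) * ennreal x"
    using \<open>y > 0\<close> by (rule bound)
  also have "ennreal (B / y) * ennreal x = ennreal (B * x powr (1 / p))"
    unfolding quotient[symmetric] by (rule ennreal_mult'[symmetric]) (use assms \<open>y > 0\<close> in simp)
  also have "ennreal (A * y powr (1 / (p - 1))) + ennreal (B * x powr (1 / p)) = ennreal ((A + B) * x powr (1 / p))"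
    unfolding root distrib_right by (rule ennreal_plus[symmetric]) (use assms in simp_all)
  finally show ?thesis .
qed

lemma nn_integral_sinh_powr_le_weight:
  fixes \<gamma> \<alpha> :: real and E :: "real set"
  assumes "\<alpha> \<ge> 0" and "E \<subseteq> {0<..}"
  shows "(\<integral>\<^sup>+ t. ennreal (indicator E t * sinh t powr \<gamma>) \<partial>lebesgue)
    \<le> (\<integral>\<^sup>+ t. ennreal (indicator E t * cosh t powr \<alpha> * sinh t powr (\<gamma> - \<alpha>)) \<partial>lebesgue)"
proof (intro nn_integral_mono ennreal_leI)
  fix t
  show "indicator E t * sinh t powr \<gamma> \<le> indicator E t * cosh t powr \<alpha> * sinh t powr (\<gamma> - \<alpha>)"
  proof (cases "t \<in> E")
    case True
    then have "t > 0" using assms by auto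
    then show ?thesis
      using True assms cosh_powr_sinh_powr_lower_bound[OF \<open>t > 0\<close>, of \<alpha> \<gamma>] by (auto simp: min_def split: if_splits)
  qed simp
qed

lemma nn_integral_sinh_powr_le_powr_weight:
  fixes \<gamma> \<alpha> p :: real and E :: "real set"
  assumes "\<gamma> > 0" and "p \<ge> max 1 (1 - \<alpha>)"
    and E: "E \<in> sets lebesgue" "E \<subseteq> {0<..}"
  shows "(\<integral>\<^sup>+ t. ennreal (indicator E t * sinh t powr \<gamma>) \<partial>lebesgue)
    \<le> ennreal (1 + 1 / \<gamma> + 2 powr max 0 (- \<alpha>)) * ennreal_powr
         (\<integral>\<^sup>+ t. ennreal (indicator E t * cosh t powr \<alpha> * sinh t powr (p * \<gamma> - \<alpha>)) \<partial>lebesgue)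
         (1 / p)"
proof -
  define C where "C = 1 + 1 / \<gamma> + 2 powr max 0 (- \<alpha>)"
  have "C > 0" using assms unfolding C_def by (simp add: add_pos_pos)
  define G where "G = (\<integral>\<^sup>+ t. ennreal (indicator E t * sinh t powr \<gamma>) \<partial>lebesgue)"
  define X where "X = (\<integral>\<^sup>+ t. ennreal (indicator E t * cosh t powr \<alpha> * sinh t powr (p * \<gamma> - \<alpha>)) \<partial>lebesgue)"
  have "G \<le> ennreal C * ennreal_powr X (1 / p)"
  proof (cases X rule: ennreal_cases)
    case (real x)
    have "G \<le> ennreal (C * x powr (1 / p))"
    proof (cases "p = 1")
      case True
      then have "\<alpha> \<ge> 0" and "p * \<gamma> - \<alpha> = \<gamma> - \<alpha>" using assms by auto
      have "G \<le> X"
        unfolding G_def X_def \<open>p * \<gamma> - \<alpha> = \<gamma> - \<alpha>\<close>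
        by (rule nn_integral_sinh_powr_le_weight[OF \<open>\<alpha> \<ge> 0\<close> \<open>E \<subseteq> {0<..}\<close>])
      then have "G \<le> ennreal x" using \<open>X = ennreal x\<close> by simp
      also have "x \<le> C * x powr (1 / p)"
        using True assms \<open>x \<ge> 0\<close> unfolding C_def by (simp add: mult_le_cancel_right1)
      finally show ?thesis by (simp add: ennreal_leI)
    next
      case False
      then have "p > 1" and "p \<ge> 1 - \<alpha>" using assms by auto
      have "G \<le> ennreal ((1 + 1 / \<gamma>) * y powr (1 / (p - 1))) + ennreal (2 powr max 0 (- \<alpha>) / y) * X"
        if "y > 0" for y
        unfolding G_def X_def
        using nn_integral_sinh_powr_split_bound[OF \<open>\<gamma> > 0\<close> \<open>p > 1\<close> \<open>p \<ge> 1 - \<alpha>\<close> that E] .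
      then show ?thesis
        unfolding C_def
        by (intro ennreal_le_powr_of_tradeoff[OF \<open>p > 1\<close> _ _ \<open>x \<ge> 0\<close>]) (use assms real in auto)
    qed
    then show ?thesis
      using real \<open>C > 0\<close> by (simp add: ennreal_powr_def ennreal_mult')
  qed (use \<open>C > 0\<close> in \<open>simp add: ennreal_powr_def ennreal_mult_top\<close>)
  then show ?thesis unfolding G_def X_def C_def .
qed

theorem lemma5p3:
  fixes \<gamma> \<alpha> p :: real
  assumes "\<gamma> > 0" and "p \<ge> max 1 (1 - \<alpha>)"
  shows "\<exists>C::real. C > 0 \<and>
    (\<forall>E. E \<in> sets lebesgue \<longrightarrow> E \<subseteq> {0<..} \<longrightarrow> emeasure lebesgue E < \<infinity> \<longrightarrow>
      (\<integral>\<^sup>+ t. ennreal (indicator E t * sinh t powr \<gamma>) \<partial>lebesgue)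
        \<le> ennreal C * ennreal_powr
             (\<integral>\<^sup>+ t. ennreal (indicator E t * cosh t powr \<alpha> * sinh t powr (p * \<gamma> - \<alpha>)) \<partial>lebesgue)
             (1 / p))"
proof (intro exI[of _ "1 + 1 / \<gamma> + 2 powr max 0 (- \<alpha>)"] conjI allI impI)
  show "1 + 1 / \<gamma> + 2 powr max 0 (- \<alpha>) > 0"
    using assms by (simp add: add_pos_pos)
  fix E :: "real set"
  assume "E \<in> sets lebesgue" and "E \<subseteq> {0<..}"
  then show "(\<integral>\<^sup>+ t. ennreal (indicator E t * sinh t powr \<gamma>) \<partial>lebesgue)
    \<le> ennreal (1 + 1 / \<gamma> + 2 powr max 0 (- \<alpha>)) * ennreal_powr
         (\<integral>\<^sup>+ t. ennreal (indicator E t * cosh t powr \<alpha> * sinh t powr (p * \<gamma> - \<alpha>)) \<partial>lebesgue)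
         (1 / p)"
    by (rule nn_integral_sinh_powr_le_powr_weight[OF assms])
qed

end
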